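(* Fix $n\ge1$. The following two statements are equivalent. (A) For all convex sets $K,M\subset\mathbb{R}^n$ that are symmetric about the origin, $\nu_n(K\cap M)\ge\nu_n(K)\,\nu_n(M)$, where $\nu_n$ is the probability measure on $\mathbb{R}^n$ with density $C(1+|x|^2)^{-\frac{n+1}{2}}$ with respect to Lebesgue measure, $C>0$ the normalising constant. (B) For all geodesically convex sets $K_1,K_2$ contained in the open hemisphere $B(o,\pi/2)$ of the unit round sphere $\mathbb{S}^n$ and both centrally symmetric around $o$, $\mathrm{vol}_n(K_1\cap K_2)\,\mathrm{vol}_n(B(o,\pi/2))\ge\mathrm{vol}_n(K_1)\,\mathrm{vol}_n(K_2)$.
   Context: $\mathrm{vol}_n$ is the Riemannian volume of $\mathbb{S}^n$, $d$ its geodesic distance, $B(o,\pi/2)=\{y: d(o,y)<\pi/2\}$. A subset of $B(o,\pi/2)$ is geodesically convex if any two of its points are joined by a minimizing geodesic segment inside it. Centrally symmetric around $o$ means: for every geodesic through $o$ meeting the boundary of the set at $x^+,x^-$, $d(o,x^+)=d(o,x^-)$ (equivalently, invariance under the geodesic reflection of $\mathbb{S}^n$ at $o$). *)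

theory Defs
  imports "HOL-Analysis.Analysis"
begin

(* The unit round sphere S^n is realised as the unit sphere of the
   (n+1)-dimensional Euclidean space 'a \<times> real, where 'a is R^n. *)

definition sdist :: "'b::euclidean_space \<Rightarrow> 'b \<Rightarrow> real" where
  "sdist x y = arccos (inner x y)"

definition min_geodesic :: "(real \<Rightarrow> 'b::euclidean_space) \<Rightarrow> 'b \<Rightarrow> 'b \<Rightarrow> bool" where
  "min_geodesic g x y \<longleftrightarrow> g 0 = x \<and> g 1 = y \<and> (\<forall>s\<in>{0..1}. g s \<in> sphere 0 1) \<and>
     (\<forall>s\<in>{0..1}. \<forall>t\<in>{0..1}. sdist (g s) (g t) = \<bar>s - t\<bar> * sdist x y)"

definition geod_convex :: "'b::euclidean_space set \<Rightarrow> bool" where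
  "geod_convex K \<longleftrightarrow> (\<forall>x\<in>K. \<forall>y\<in>K. \<exists>g. min_geodesic g x y \<and> g ` {0..1} \<subseteq> K)"

definition sball :: "'b::euclidean_space \<Rightarrow> real \<Rightarrow> 'b set" where
  "sball p r = {y \<in> sphere 0 1. sdist p y < r}"

definition srefl :: "'b::euclidean_space \<Rightarrow> 'b \<Rightarrow> 'b" where
  "srefl p x = (2 * inner x p) *\<^sub>R p - x"

definition centrally_symmetric :: "'b::euclidean_space \<Rightarrow> 'b set \<Rightarrow> bool" where
  "centrally_symmetric p K \<longleftrightarrow> (\<forall>x\<in>K. srefl p x \<in> K)"

definition north :: "'a::euclidean_space \<times> real" where
  "north = (0, 1)"

(* Riemannian volume of a subset A of the unit sphere S^{d-1} \<subseteq> R^d, via the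
   cone formula vol_{d-1}(A) = d * Lebesgue(\<Union>{t x | 0\<le>t\<le>1, x\<in>A}) *)
definition svol :: "'b::euclidean_space set \<Rightarrow> real" where
  "svol A = real DIM('b) * measure lebesgue {t *\<^sub>R x | t x. t \<in> {0..1} \<and> x \<in> A}"

definition cauchy_dens :: "nat \<Rightarrow> 'a::euclidean_space \<Rightarrow> real" where
  "cauchy_dens n x = (1 + (norm x)\<^sup>2) powr (- (real n + 1) / 2)"

(* nu n, used with n = DIM('a) *)
definition nu :: "nat \<Rightarrow> 'a::euclidean_space measure" where
  "nu n = density lebesgue (\<lambda>x. ennreal (cauchy_dens n x / integral\<^sup>L (lebesgue :: 'a measure) (cauchy_dens n)))"

definition origin_symmetric :: "'a::real_vector set \<Rightarrow> bool" where
  "origin_symmetric K \<longleftrightarrow> (\<forall>x\<in>K. - x \<in> K)"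

end

theory Submission
  imports Defs
begin

text \<open>The gnomonic projection z \<mapsto> fst z / snd z from the centre of the sphere identifies the
  open hemisphere B(o,\<pi>/2) with \<real>^n: great circle arcs go to line segments, geodesic
  convexity to convexity, and the reflection at o to x \<mapsto> -x. The cone over the lift of
  U \<subseteq> \<real>^n is sliced at height h in h \<cdot> (U \<inter> {x. |x|^2 \<le> h^(-2) - 1}), so by
  Cavalieri vol_n of the lift is \<integral>_U (1 + |x|^2)^(-(n+1)/2) dx. Hence
  \<nu>_n(K) = vol_n(lift K) / vol_n(B(o,\<pi>/2)) for convex K, and the two correlation
  inequalities are the same statement.\<close>

definition gnomonic :: "'a::real_vector \<times> real \<Rightarrow> 'a" where
  "gnomonic z = (1 / snd z) *\<^sub>R fst z"

definition gnomonic_height :: "'a::real_normed_vector \<Rightarrow> real" where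
  "gnomonic_height x = 1 / sqrt (1 + (norm x)\<^sup>2)"

definition gnomonic_inv :: "'a::real_normed_vector \<Rightarrow> 'a \<times> real" where
  "gnomonic_inv x = gnomonic_height x *\<^sub>R (x, 1)"

lemma one_plus_norm_sq_pos: "0 < 1 + (norm (x::'a::real_normed_vector))\<^sup>2"
  by (simp add: add_pos_nonneg)

lemma gnomonic_height_pos: "0 < gnomonic_height x"
  using one_plus_norm_sq_pos[of x] by (simp add: gnomonic_height_def)

lemma snd_gnomonic_inv [simp]: "snd (gnomonic_inv x) = gnomonic_height x"
  and fst_gnomonic_inv [simp]: "fst (gnomonic_inv x) = gnomonic_height x *\<^sub>R x"
  by (simp_all add: gnomonic_inv_def)

lemma norm_gnomonic_inv [simp]: "norm (gnomonic_inv x) = 1"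
proof -
  have "norm (gnomonic_inv x) = sqrt ((gnomonic_height x)\<^sup>2 * (1 + (norm x)\<^sup>2))"
    by (simp add: gnomonic_inv_def norm_Pair power_mult_distrib algebra_simps)
  also have "(gnomonic_height x)\<^sup>2 * (1 + (norm x)\<^sup>2) = 1"
    using one_plus_norm_sq_pos[of x] by (simp add: gnomonic_height_def power_divide)
  finally show ?thesis by simp
qed

lemma gnomonic_gnomonic_inv [simp]: "gnomonic (gnomonic_inv x) = x"
  using gnomonic_height_pos[of x] by (simp add: gnomonic_def)

lemma inj_gnomonic_inv: "inj gnomonic_inv"
  by (metis gnomonic_gnomonic_inv injI)

lemma gnomonic_inv_gnomonic:
  assumes "norm z = 1" "0 < snd z"
  shows "gnomonic_inv (gnomonic z) = z"
proof -
  have "(norm (fst z))\<^sup>2 + (snd z)\<^sup>2 = 1"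
    using assms(1) by (cases z) (simp add: norm_Pair)
  then have "1 + (norm (gnomonic z))\<^sup>2 = 1 / (snd z)\<^sup>2"
    using assms(2) by (simp add: gnomonic_def power_divide field_simps)
  then have "gnomonic_height (gnomonic z) = snd z"
    using assms(2) by (simp add: gnomonic_height_def real_sqrt_divide)
  then show ?thesis
    using assms(2) by (cases z) (simp add: gnomonic_inv_def gnomonic_def)
qed

lemma gnomonic_scaleR: "c \<noteq> 0 \<Longrightarrow> gnomonic (c *\<^sub>R z) = gnomonic z"
  by (simp add: gnomonic_def)

lemma gnomonic_lincomb:
  fixes x y :: "'a::real_vector \<times> real"
  assumes "0 < a * snd x + b * snd y" "snd x \<noteq> 0" "snd y \<noteq> 0"
  shows "gnomonic (a *\<^sub>R x + b *\<^sub>R y)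
    = (1 - b * snd y / (a * snd x + b * snd y)) *\<^sub>R gnomonic x
      + (b * snd y / (a * snd x + b * snd y)) *\<^sub>R gnomonic y"
proof -
  have "fst x = snd x *\<^sub>R gnomonic x" "fst y = snd y *\<^sub>R gnomonic y"
    using assms(2,3) by (simp_all add: gnomonic_def)
  moreover have "1 - b * snd y / (a * snd x + b * snd y) = a * snd x / (a * snd x + b * snd y)"
    using assms(1) by (simp add: field_simps)
  ultimately show ?thesis
    unfolding gnomonic_def[of "a *\<^sub>R x + b *\<^sub>R y"] using assms(1)
    by (simp add: scaleR_add_right divide_inverse mult_ac del: snd_add snd_scaleR) simp
qed

lemma gnomonic_lincomb_in_segment:
  fixes x y :: "'a::real_vector \<times> real"
  assumes "0 \<le> a" "0 \<le> b" "a \<noteq> 0 \<or> b \<noteq> 0" "0 < snd x" "0 < snd y"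
  shows "gnomonic (a *\<^sub>R x + b *\<^sub>R y) \<in> closed_segment (gnomonic x) (gnomonic y)"
proof -
  let ?\<mu> = "b * snd y / (a * snd x + b * snd y)"
  have pos: "0 < a * snd x + b * snd y"
    using assms by (auto simp: add_pos_nonneg add_nonneg_pos)
  then have "0 \<le> ?\<mu>" "?\<mu> \<le> 1"
    using assms by (simp_all add: divide_le_eq_1)
  then show ?thesis
    using gnomonic_lincomb[OF pos] assms(4,5) unfolding closed_segment_def by force
qed

lemma sball_north: "sball (north::'a::euclidean_space \<times> real) (pi/2) = {z. norm z = 1 \<and> 0 < snd z}"
proof -
  have "arccos (snd z) < pi/2 \<longleftrightarrow> 0 < snd z" if "norm z = 1" for z :: "'a \<times> real"
  proof -
    have "\<bar>snd z\<bar> \<le> 1"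
      using norm_snd_le[of "snd z" "fst z"] that by simp
    then have "arccos (snd z) < arccos 0 \<longleftrightarrow> 0 < snd z"
      using arccos_le_arccos[of "snd z" 0] arccos_less_arccos[of 0 "snd z"]
      by (cases "0 < snd z") (auto simp: abs_le_iff)
    then show ?thesis by simp
  qed
  moreover have "inner north z = snd z" for z :: "'a \<times> real"
    by (cases z) (simp add: north_def inner_Pair)
  ultimately show ?thesis by (auto simp: sball_def sdist_def)
qed

lemma range_gnomonic_inv: "range gnomonic_inv = sball (north::'a::euclidean_space \<times> real) (pi/2)"
  unfolding sball_north using gnomonic_height_pos
  by (auto simp: image_iff intro: gnomonic_inv_gnomonic[symmetric])

lemma gnomonic_inv_gnomonic_image:
  "K \<subseteq> sball (north::'a::euclidean_space \<times> real) (pi/2) \<Longrightarrow> gnomonic_inv ` gnomonic ` K = K"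
  unfolding sball_north by (force simp: image_comp gnomonic_inv_gnomonic)

lemma srefl_north: "srefl (north::'a::euclidean_space \<times> real) z = (- fst z, snd z)"
  by (cases z) (simp add: srefl_def north_def inner_Pair)

lemma centrally_symmetric_gnomonic_inv_image:
  fixes K :: "'a::euclidean_space set"
  assumes "origin_symmetric K"
  shows "centrally_symmetric north (gnomonic_inv ` K)"
proof -
  have "srefl north (gnomonic_inv x) = gnomonic_inv (- x)" for x :: 'a
    by (simp add: srefl_north gnomonic_inv_def gnomonic_height_def)
  then show ?thesis
    using assms by (auto simp: centrally_symmetric_def origin_symmetric_def)
qed

lemma origin_symmetric_gnomonic_image:
  fixes K :: "('a::euclidean_space \<times> real) set"
  assumes "centrally_symmetric north K"
  shows "origin_symmetric (gnomonic ` K)"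
proof -
  have "gnomonic (srefl north z) = - gnomonic z" for z :: "'a \<times> real"
    by (simp add: srefl_north gnomonic_def)
  then show ?thesis
    using assms unfolding centrally_symmetric_def origin_symmetric_def by (metis image_iff)
qed

lemma cos_sdist: "norm x = 1 \<Longrightarrow> norm y = 1 \<Longrightarrow> cos (sdist x y) = inner x y"
  using Cauchy_Schwarz_ineq2[of x y] by (simp add: sdist_def cos_arccos_abs)

lemma sdist_self: "norm x = 1 \<Longrightarrow> sdist x x = 0"
  by (simp add: sdist_def dot_square_norm)

lemma sdist_bounds:
  assumes "norm x = 1" "norm y = 1" "x \<noteq> y" "x \<noteq> - y"
  shows "0 < sdist x y" "sdist x y < pi"
proof -
  have xx: "inner x x = 1" "inner y y = 1"
    using assms(1,2) by (simp_all add: dot_square_norm)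
  have "inner x y \<noteq> 1"
  proof
    assume "inner x y = 1"
    then have "inner (x - y) (x - y) = 0"
      using xx by (simp add: inner_diff_left inner_diff_right inner_commute)
    then show False using assms(3) by simp
  qed
  moreover have "inner x y \<noteq> -1"
  proof
    assume "inner x y = -1"
    then have "inner (x + y) (x + y) = 0"
      using xx by (simp add: inner_add_left inner_add_right inner_commute)
    then show False using assms(4) by (simp add: add_eq_0_iff2)
  qed
  moreover have "\<bar>inner x y\<bar> \<le> 1"
    using Cauchy_Schwarz_ineq2[of x y] assms(1,2) by simp
  ultimately have "0 < arccos (inner x y) \<and> arccos (inner x y) < pi"
    by (intro arccos_lt_bounded) auto
  then show "0 < sdist x y" "sdist x y < pi" by (auto simp: sdist_def)
qed

lemma sdist_bounds_hemisphere:
  fixes x y :: "'a::euclidean_space \<times> real"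
  assumes "x \<in> sball north (pi/2)" "y \<in> sball north (pi/2)" "x \<noteq> y"
  shows "0 < sdist x y" "sdist x y < pi"
proof -
  have "x \<noteq> - y" using assms(1,2) by (auto simp: sball_north)
  then show "0 < sdist x y" "sdist x y < pi"
    using sdist_bounds assms by (auto simp: sball_north)
qed

definition slerp :: "'b::euclidean_space \<Rightarrow> 'b \<Rightarrow> real \<Rightarrow> 'b" where
  "slerp x y s = (sin ((1 - s) * sdist x y) / sin (sdist x y)) *\<^sub>R x
                 + (sin (s * sdist x y) / sin (sdist x y)) *\<^sub>R y"

lemma slerp_0: "sin (sdist x y) \<noteq> 0 \<Longrightarrow> slerp x y 0 = x"
  and slerp_1: "sin (sdist x y) \<noteq> 0 \<Longrightarrow> slerp x y 1 = y"
  by (simp_all add: slerp_def)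

lemma inner_slerp:
  assumes "norm x = 1" "norm y = 1" "0 < sdist x y" "sdist x y < pi"
  shows "inner (slerp x y s) (slerp x y t) = cos ((s - t) * sdist x y)"
proof -
  let ?\<theta> = "sdist x y"
  have sin: "sin ?\<theta> \<noteq> 0" using sin_gt_zero assms(3,4) by force
  have xy: "inner x y = cos ?\<theta>" "inner y x = cos ?\<theta>"
    using cos_sdist[OF assms(1,2)] by (simp_all add: inner_commute)
  have trig: "sin (\<theta> - A) * sin (\<theta> - B) + sin A * sin B
      + cos \<theta> * (sin (\<theta> - A) * sin B + sin A * sin (\<theta> - B)) = (sin \<theta>)\<^sup>2 * cos (A - B)"
    for \<theta> A B :: real
    using sin_cos_squared_add[of \<theta>] unfolding sin_diff cos_diff by algebra
  have "inner (slerp x y s) (slerp x y t) =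
    (sin ((1-s)*?\<theta>) * sin ((1-t)*?\<theta>) + sin (s*?\<theta>) * sin (t*?\<theta>)
      + cos ?\<theta> * (sin ((1-s)*?\<theta>) * sin (t*?\<theta>) + sin (s*?\<theta>) * sin ((1-t)*?\<theta>))) / (sin ?\<theta>)\<^sup>2"
    using sin assms(1,2)
    by (simp add: slerp_def inner_add_left inner_add_right xy dot_square_norm field_simps power2_eq_square)
  also have "\<dots> = cos ((s - t) * ?\<theta>)"
    using trig[of ?\<theta> "s * ?\<theta>" "t * ?\<theta>"] sin by (simp add: algebra_simps)
  finally show ?thesis .
qed

lemma norm_slerp:
  assumes "norm x = 1" "norm y = 1" "0 < sdist x y" "sdist x y < pi"
  shows "norm (slerp x y s) = 1"
  using inner_slerp[OF assms, of s s] by (simp add: norm_eq_sqrt_inner)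

lemma sdist_slerp:
  assumes "norm x = 1" "norm y = 1" "0 < sdist x y" "sdist x y < pi"
    and "s \<in> {0..1}" "t \<in> {0..1}"
  shows "sdist (slerp x y s) (slerp x y t) = \<bar>s - t\<bar> * sdist x y"
proof -
  have "\<bar>s - t\<bar> * sdist x y = (s - t) * sdist x y \<or> \<bar>s - t\<bar> * sdist x y = - ((s - t) * sdist x y)"
    by (auto simp: abs_if algebra_simps)
  then have "cos ((s - t) * sdist x y) = cos (\<bar>s - t\<bar> * sdist x y)"
    by (metis cos_minus)
  moreover have "\<bar>s - t\<bar> * sdist x y \<le> 1 * pi"
    using assms by (intro mult_mono) auto
  ultimately show ?thesis
    using inner_slerp[OF assms(1-4)] assms(3)
    unfolding sdist_def[of "slerp x y s"] by (simp add: arccos_cos)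
qed

lemma min_geodesic_slerp:
  assumes "norm x = 1" "norm y = 1" "0 < sdist x y" "sdist x y < pi"
  shows "min_geodesic (slerp x y) x y"
  using assms sin_gt_zero[OF assms(3,4)]
  by (simp add: min_geodesic_def slerp_0 slerp_1 norm_slerp sdist_slerp)

text \<open>g s has the same inner products with x and y as slerp x y s, which lies in the
  span of x and y; so g s - slerp x y s is orthogonal to slerp x y s, and two unit vectors
  in this position coincide.\<close>

lemma min_geodesic_eq_slerp:
  assumes g: "min_geodesic g x y" and "0 < sdist x y" "sdist x y < pi" and s: "s \<in> {0..1}"
  shows "g s = slerp x y s"
proof -
  let ?\<theta> = "sdist x y" and ?z = "g s" and ?w = "slerp x y s"
  have nx: "norm x = 1" and ny: "norm y = 1" and nz: "norm ?z = 1"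
    and dist: "\<And>t. t \<in> {0..1} \<Longrightarrow> sdist ?z (g t) = \<bar>s - t\<bar> * ?\<theta>"
    using g s by (auto simp: min_geodesic_def)
  have sin: "sin ?\<theta> \<noteq> 0" using sin_gt_zero assms(2,3) by force
  have slerp_inner: "\<And>a b. inner (slerp x y a) (slerp x y b) = cos ((a - b) * ?\<theta>)"
    by (rule inner_slerp[OF nx ny assms(2,3)])
  have zx: "inner ?z x = inner ?w x"
    using cos_sdist[OF nz nx] dist[of 0] slerp_inner[of s 0] g s sin
    by (simp add: min_geodesic_def slerp_0)
  have "cos ((s - 1) * ?\<theta>) = cos ((1 - s) * ?\<theta>)"
    by (metis cos_minus minus_diff_eq mult_minus_left)
  then have zy: "inner ?z y = inner ?w y"
    using cos_sdist[OF nz ny] dist[of 1] slerp_inner[of s 1] g s sin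
    by (simp add: min_geodesic_def slerp_1)
  define d where "d = ?z - ?w"
  have "inner d x = 0" "inner d y = 0"
    using zx zy by (simp_all add: d_def inner_diff_left)
  then have "inner (?z - ?w) ?w = 0"
    unfolding d_def[symmetric] by (simp add: slerp_def inner_add_right)
  moreover have "inner ?w ?w = 1" "inner ?z ?z = 1"
    using slerp_inner[of s s] nz by (simp_all add: dot_square_norm)
  ultimately have "inner (?z - ?w) (?z - ?w) = 0"
    by (simp add: inner_diff_left inner_diff_right inner_commute)
  then show ?thesis by simp
qed

lemma slerp_coeffs_nonneg:
  assumes "0 < \<theta>" "\<theta> < pi" "s \<in> {0..1}"
  shows "0 \<le> sin ((1 - s) * \<theta>) / sin \<theta>" "0 \<le> sin (s * \<theta>) / sin \<theta>"
proof -
  have "0 < sin \<theta>" using assms by (intro sin_gt_zero)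
  moreover have "0 \<le> sin (r * \<theta>)" if "r \<in> {0..1}" for r
  proof -
    have "r * \<theta> \<le> 1 * \<theta>"
      using assms that by (intro mult_right_mono) auto
    moreover have "0 \<le> r * \<theta>"
      using assms that by simp
    ultimately have "0 \<le> r * \<theta>" "r * \<theta> \<le> pi"
      using assms by linarith+
    then show ?thesis by (rule sin_ge_zero)
  qed
  ultimately show "0 \<le> sin ((1 - s) * \<theta>) / sin \<theta>" "0 \<le> sin (s * \<theta>) / sin \<theta>"
    using assms(3) by auto
qed

lemma slerp_in_hemisphere:
  fixes x y :: "'a::euclidean_space \<times> real"
  assumes x: "x \<in> sball north (pi/2)" and y: "y \<in> sball north (pi/2)" and "x \<noteq> y" "s \<in> {0..1}"
  shows "slerp x y s \<in> sball north (pi/2)"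
proof -
  let ?\<theta> = "sdist x y"
  define a where "a = sin ((1 - s) * ?\<theta>) / sin ?\<theta>"
  define b where "b = sin (s * ?\<theta>) / sin ?\<theta>"
  have \<theta>: "0 < ?\<theta>" "?\<theta> < pi" by (rule sdist_bounds_hemisphere[OF x y \<open>x \<noteq> y\<close>])+
  have n: "norm x = 1" "norm y = 1" "0 < snd x" "0 < snd y" using x y by (auto simp: sball_north)
  have ab: "0 \<le> a" "0 \<le> b"
    using slerp_coeffs_nonneg[OF \<theta> \<open>s \<in> {0..1}\<close>] by (simp_all add: a_def b_def)
  have slerp: "slerp x y s = a *\<^sub>R x + b *\<^sub>R y" by (simp add: slerp_def a_def b_def)
  have norm: "norm (slerp x y s) = 1" by (rule norm_slerp[OF n(1,2) \<theta>])
  then have "a \<noteq> 0 \<or> b \<noteq> 0" by (auto simp: slerp)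
  then have "0 < a * snd x + b * snd y"
    using ab n(3,4) by (auto simp: add_pos_nonneg add_nonneg_pos)
  then show ?thesis using norm by (simp add: sball_north slerp)
qed

lemma gnomonic_slerp_arc:
  fixes x y :: "'a::euclidean_space \<times> real"
  assumes x: "x \<in> sball north (pi/2)" and y: "y \<in> sball north (pi/2)" and "x \<noteq> y"
  shows "gnomonic ` slerp x y ` {0..1} = closed_segment (gnomonic x) (gnomonic y)"
proof -
  let ?\<theta> = "sdist x y"
  define a where "a s = sin ((1 - s) * ?\<theta>) / sin ?\<theta>" for s
  define b where "b s = sin (s * ?\<theta>) / sin ?\<theta>" for s
  define \<mu> where "\<mu> s = b s * snd y / (a s * snd x + b s * snd y)" for s
  have \<theta>: "0 < ?\<theta>" "?\<theta> < pi" by (rule sdist_bounds_hemisphere[OF x y \<open>x \<noteq> y\<close>])+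
  then have sin: "sin ?\<theta> \<noteq> 0" using sin_gt_zero by force
  have n: "0 < snd x" "0 < snd y" using x y by (auto simp: sball_north)
  have slerp: "slerp x y s = a s *\<^sub>R x + b s *\<^sub>R y" for s
    by (simp add: slerp_def a_def b_def)
  have pos: "0 < a s * snd x + b s * snd y" if "s \<in> {0..1}" for s
    using slerp_in_hemisphere[OF x y \<open>x \<noteq> y\<close> that] by (simp add: sball_north slerp)
  have gnomonic: "gnomonic (slerp x y s) = (1 - \<mu> s) *\<^sub>R gnomonic x + \<mu> s *\<^sub>R gnomonic y"
    if "s \<in> {0..1}" for s
    using gnomonic_lincomb[OF pos[OF that]] n by (simp add: slerp \<mu>_def)
  show ?thesis
  proof (intro equalityI subsetI)
    fix p assume "p \<in> gnomonic ` slerp x y ` {0..1}"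
    then obtain s where s: "s \<in> {0..1}" "p = gnomonic (slerp x y s)" by blast
    have "0 \<le> a s" "0 \<le> b s"
      using slerp_coeffs_nonneg[OF \<theta> s(1)] by (simp_all add: a_def b_def)
    then have "0 \<le> \<mu> s" "\<mu> s \<le> 1"
      using pos[OF s(1)] n by (simp_all add: \<mu>_def divide_le_eq_1)
    then show "p \<in> closed_segment (gnomonic x) (gnomonic y)"
      using gnomonic[OF s(1)] s(2) unfolding closed_segment_def by blast
  next
    fix p assume "p \<in> closed_segment (gnomonic x) (gnomonic y)"
    then obtain u where u: "0 \<le> u" "u \<le> 1" "p = (1 - u) *\<^sub>R gnomonic x + u *\<^sub>R gnomonic y"
      unfolding closed_segment_def by blast
    have "continuous_on {0..1} a" "continuous_on {0..1} b"
      unfolding a_def b_def using sin by (auto intro!: continuous_intros)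
    moreover have "\<forall>s\<in>{0..1}. a s * snd x + b s * snd y \<noteq> 0"
      using pos by force
    ultimately have "continuous_on {0..1} \<mu>"
      unfolding \<mu>_def by (intro continuous_intros) auto
    moreover have "\<mu> 0 = 0" "\<mu> 1 = 1"
      using sin n by (simp_all add: \<mu>_def a_def b_def)
    ultimately obtain s where "0 \<le> s" "s \<le> 1" "\<mu> s = u"
      using IVT'[of \<mu> 0 u 1] u by auto
    then show "p \<in> gnomonic ` slerp x y ` {0..1}"
      using gnomonic[of s] u(3) by force
  qed
qed

lemma geod_convex_gnomonic_inv_image:
  fixes K :: "'a::euclidean_space set"
  assumes "convex K"
  shows "geod_convex (gnomonic_inv ` K)"
  unfolding geod_convex_def
proof (intro ballI)
  fix x y assume x: "x \<in> gnomonic_inv ` K" and y: "y \<in> gnomonic_inv ` K"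
  have hx: "x \<in> sball north (pi/2)" and hy: "y \<in> sball north (pi/2)"
    using x y range_gnomonic_inv by auto
  show "\<exists>g. min_geodesic g x y \<and> g ` {0..1} \<subseteq> gnomonic_inv ` K"
  proof (cases "x = y")
    case True
    then show ?thesis
      using x hx by (intro exI[of _ "\<lambda>_. x"]) (auto simp: min_geodesic_def sdist_self sball_north)
  next
    case False
    have "slerp x y ` {0..1} = gnomonic_inv ` gnomonic ` slerp x y ` {0..1}"
      using slerp_in_hemisphere[OF hx hy False] by (simp add: gnomonic_inv_gnomonic_image image_subset_iff)
    also have "\<dots> \<subseteq> gnomonic_inv ` K"
    proof -
      obtain p q where "p \<in> K" "q \<in> K" "x = gnomonic_inv p" "y = gnomonic_inv q"
        using x y by blast
      then have "closed_segment (gnomonic x) (gnomonic y) \<subseteq> K"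
        using assms by (simp add: closed_segment_subset)
      then show ?thesis by (simp add: gnomonic_slerp_arc[OF hx hy False] image_mono)
    qed
    finally have "slerp x y ` {0..1} \<subseteq> gnomonic_inv ` K" .
    moreover have "min_geodesic (slerp x y) x y"
      using hx hy sdist_bounds_hemisphere[OF hx hy False]
      by (intro min_geodesic_slerp) (auto simp: sball_north)
    ultimately show ?thesis by blast
  qed
qed

lemma convex_gnomonic_image:
  fixes K :: "('a::euclidean_space \<times> real) set"
  assumes "K \<subseteq> sball north (pi/2)" "geod_convex K"
  shows "convex (gnomonic ` K)"
  unfolding convex_contains_segment
proof (intro ballI)
  fix p q assume "p \<in> gnomonic ` K" "q \<in> gnomonic ` K"
  then obtain x y where x: "x \<in> K" "p = gnomonic x" and y: "y \<in> K" "q = gnomonic y"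
    by blast
  have hx: "x \<in> sball north (pi/2)" and hy: "y \<in> sball north (pi/2)"
    using x y assms(1) by auto
  show "closed_segment p q \<subseteq> gnomonic ` K"
  proof (cases "x = y")
    case False
    obtain g where g: "min_geodesic g x y" "g ` {0..1} \<subseteq> K"
      using assms(2) x y unfolding geod_convex_def by blast
    have "g ` {0..1} = slerp x y ` {0..1}"
      using min_geodesic_eq_slerp[OF g(1) sdist_bounds_hemisphere[OF hx hy False]]
      by (rule image_cong[OF refl])
    then have "closed_segment p q = gnomonic ` g ` {0..1}"
      by (simp add: x y gnomonic_slerp_arc[OF hx hy False])
    then show ?thesis using g(2) by auto
  qed (use x y in simp)
qed

definition gnomonic_cone :: "'a::real_normed_vector set \<Rightarrow> ('a \<times> real) set" where
  "gnomonic_cone U = {z. 0 < snd z \<and> gnomonic z \<in> U \<and> norm z \<le> 1}"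

lemma gnomonic_cone_mono: "A \<subseteq> B \<Longrightarrow> gnomonic_cone A \<subseteq> gnomonic_cone B"
  by (auto simp: gnomonic_cone_def)

lemma gnomonic_cone_subset_cball: "gnomonic_cone K \<subseteq> cball 0 1"
  by (auto simp: gnomonic_cone_def)

lemma gnomonic_cone_borel:
  fixes U :: "'a::euclidean_space set"
  assumes "open U"
  shows "gnomonic_cone U \<in> sets borel"
proof -
  have "open ({z::'a \<times> real. 0 < snd z} \<inter> gnomonic -` U)"
  proof (rule continuous_open_preimage[OF _ _ assms])
    show "open {z::'a \<times> real. 0 < snd z}"
      by (simp add: open_Collect_less continuous_on_snd)
    show "continuous_on {z::'a \<times> real. 0 < snd z} gnomonic"
      unfolding gnomonic_def by (intro continuous_intros) auto
  qed
  moreover have "gnomonic_cone U = ({z. 0 < snd z} \<inter> gnomonic -` U) \<inter> cball 0 1"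
    by (auto simp: gnomonic_cone_def)
  ultimately show ?thesis by auto
qed

lemma lebesgue_measurable_insert_gnomonic_cone:
  fixes U :: "'a::euclidean_space set"
  assumes "open U"
  shows "insert 0 (gnomonic_cone U) \<in> lmeasurable"
proof (rule bounded_set_imp_lmeasurable)
  show "bounded (insert 0 (gnomonic_cone U))"
    using gnomonic_cone_subset_cball by (auto intro: bounded_subset[OF bounded_cball])
  show "insert 0 (gnomonic_cone U) \<in> sets lebesgue"
    using gnomonic_cone_borel[OF assms] by simp
qed

lemma gnomonic_cone_eq_scaleR_gnomonic_inv:
  fixes z :: "'a::real_normed_vector \<times> real"
  assumes "z \<in> gnomonic_cone K"
  shows "z = norm z *\<^sub>R gnomonic_inv (gnomonic z)"
proof -
  have "0 < snd z" using assms by (simp add: gnomonic_cone_def)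
  then have "0 < norm z"
    by (cases z) (auto simp: zero_prod_def)
  moreover have "gnomonic_inv (gnomonic ((1 / norm z) *\<^sub>R z)) = (1 / norm z) *\<^sub>R z"
    using \<open>0 < norm z\<close> \<open>0 < snd z\<close> by (intro gnomonic_inv_gnomonic) simp_all
  ultimately show ?thesis
    by (simp add: gnomonic_scaleR)
qed

lemma cone_gnomonic_inv_image:
  fixes K :: "'a::real_normed_vector set"
  assumes "K \<noteq> {}"
  shows "{t *\<^sub>R z | t z. t \<in> {0..1} \<and> z \<in> gnomonic_inv ` K} = insert 0 (gnomonic_cone K)"
    (is "?C = _")
proof (intro equalityI subsetI)
  fix z assume "z \<in> ?C"
  then obtain t x where z: "z = t *\<^sub>R gnomonic_inv x" "t \<in> {0..1}" "x \<in> K" by blast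
  show "z \<in> insert 0 (gnomonic_cone K)"
  proof (cases "t = 0")
    case False
    then have "0 < t" using z(2) by simp
    then show ?thesis
      using z gnomonic_height_pos[of x] by (simp add: gnomonic_cone_def gnomonic_scaleR)
  qed (use z in simp)
next
  fix z assume z: "z \<in> insert 0 (gnomonic_cone K)"
  obtain x where "x \<in> K" using assms by auto
  then have "0 \<in> ?C"
    by (intro CollectI exI[of _ 0] exI[of _ "gnomonic_inv x"]) auto
  moreover have "z \<in> ?C" if "z \<in> gnomonic_cone K"
  proof -
    have "norm z \<in> {0..1}" "gnomonic z \<in> K"
      using that by (auto simp: gnomonic_cone_def)
    then show ?thesis
      using gnomonic_cone_eq_scaleR_gnomonic_inv[OF that] by blast
  qed
  ultimately show "z \<in> ?C" using z by blast
qed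

lemma svol_gnomonic_inv_image:
  fixes K :: "'a::euclidean_space set"
  shows "svol (gnomonic_inv ` K) = real (DIM('a) + 1) * measure lebesgue (insert 0 (gnomonic_cone K))"
proof (cases "K = {}")
  case True
  have "measure lebesgue {0::'a \<times> real} = 0"
    by (intro measure_eq_0_null_sets null_sets_completionI) (simp add: countable_imp_null_set_lborel)
  then show ?thesis using True by (simp add: svol_def gnomonic_cone_def)
next
  case False
  then show ?thesis unfolding svol_def cone_gnomonic_inv_image[OF False] by simp
qed

definition cauchy_mass :: "'a::euclidean_space set \<Rightarrow> ennreal" where
  "cauchy_mass U = (\<integral>\<^sup>+x. indicator U x * ennreal (cauchy_dens DIM('a) x) \<partial>lborel)"

lemma cauchy_dens_nonneg: "0 \<le> cauchy_dens n x"
  by (simp add: cauchy_dens_def)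

lemma borel_measurable_cauchy_dens [measurable]:
  "cauchy_dens n \<in> borel_measurable (borel :: 'a::euclidean_space measure)"
  unfolding cauchy_dens_def by measurable

lemma nn_integral_lborel_scaleR:
  fixes g :: "'a::euclidean_space \<Rightarrow> ennreal"
  assumes [measurable]: "g \<in> borel_measurable borel" and "c \<noteq> 0"
  shows "(\<integral>\<^sup>+x. g x \<partial>lborel) = ennreal (\<bar>c\<bar> ^ DIM('a)) * (\<integral>\<^sup>+x. g (c *\<^sub>R x) \<partial>lborel)"
proof -
  have "(\<integral>\<^sup>+x. g x \<partial>lborel)
      = (\<integral>\<^sup>+x. g x \<partial>density (distr lborel borel (\<lambda>x. 0 + c *\<^sub>R x)) (\<lambda>_. \<bar>c\<bar> ^ DIM('a)))"
    using lborel_affine[OF assms(2), of "0::'a"] by simp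
  then show ?thesis
    by (simp add: nn_integral_density nn_integral_distr nn_integral_cmult)
qed

lemma nn_integral_power_interval:
  assumes "0 \<le> r"
  shows "(\<integral>\<^sup>+h. ennreal (indicator {0<..r} h * h ^ n) \<partial>lborel) = ennreal (r ^ (n + 1) / (n + 1))"
proof -
  have "((\<lambda>h. h ^ n) has_integral (r ^ (n + 1) / (n + 1) - 0 ^ (n + 1) / (n + 1))) {0..r}"
    using assms
  proof (intro fundamental_theorem_of_calculus)
    fix x :: real
    have "((\<lambda>h. h ^ (n + 1) / real (n + 1)) has_real_derivative (real (n + 1) * x ^ n / real (n + 1)))
        (at x within {0..r})"
      by (intro derivative_eq_intros) auto
    then show "((\<lambda>h. h ^ (n + 1) / real (n + 1)) has_vector_derivative x ^ n) (at x within {0..r})"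
      by (simp add: has_real_derivative_iff_has_vector_derivative[symmetric])
  qed
  then have "((\<lambda>h. h ^ n) has_integral (r ^ (n + 1) / (n + 1))) {0..r}"
    by simp
  moreover have "negligible {h \<in> {0..r} - {0<..r}. h ^ n \<noteq> (0::real)}"
    by (rule negligible_subset[of "{0}"]) auto
  moreover have "negligible {h \<in> {0<..r} - {0..r}. h ^ n \<noteq> (0::real)}"
    by (rule negligible_subset[of "{}"]) auto
  ultimately have "((\<lambda>h. h ^ n) has_integral (r ^ (n + 1) / (n + 1))) {0<..r}"
    by (simp only: has_integral_spike_set_eq[of "{0<..r}" "{0..r}" "\<lambda>h. h ^ n"])
  then show ?thesis
    by (rule nn_integral_has_integral_lebesgue[rotated]) auto
qed

lemma indicator_gnomonic_cone_slice:
  assumes "0 < h"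
  shows "indicator (gnomonic_cone U) (h *\<^sub>R x, h)
    = (indicator U x * indicator {0<..gnomonic_height x} h :: real)"
proof -
  have "norm (h *\<^sub>R x, h) = sqrt (h\<^sup>2 * (1 + (norm x)\<^sup>2))"
    by (simp add: norm_Pair algebra_simps)
  also have "\<dots> = h * sqrt (1 + (norm x)\<^sup>2)"
    using assms by (simp add: real_sqrt_mult)
  finally have "norm (h *\<^sub>R x, h) = h * sqrt (1 + (norm x)\<^sup>2)" .
  then have "norm (h *\<^sub>R x, h) \<le> 1 \<longleftrightarrow> h \<le> gnomonic_height x"
    using one_plus_norm_sq_pos[of x] by (simp add: gnomonic_height_def le_divide_eq)
  then show ?thesis
    using assms by (auto simp: gnomonic_cone_def gnomonic_def indicator_def)
qed

lemma borel_measurable_gnomonic_height [measurable]: "gnomonic_height \<in> borel_measurable borel"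
  unfolding gnomonic_height_def by measurable

lemma gnomonic_height_power:
  "gnomonic_height x ^ (DIM('a) + 1) = cauchy_dens DIM('a) (x::'a::euclidean_space)"
proof -
  let ?a = "1 + (norm x)\<^sup>2"
  have "gnomonic_height x = ?a powr (-1/2)"
    using one_plus_norm_sq_pos[of x] by (simp add: gnomonic_height_def powr_minus_divide powr_half_sqrt)
  then have "gnomonic_height x ^ (DIM('a) + 1) = (?a powr (-1/2)) powr (real (DIM('a) + 1))"
    using one_plus_norm_sq_pos[of x] by (subst powr_realpow) auto
  also have "\<dots> = ?a powr (- (real DIM('a) + 1) / 2)"
    by (simp add: powr_powr) (rule arg_cong[where f="\<lambda>e. _ powr e"]; simp add: field_simps)
  finally show ?thesis by (simp add: cauchy_dens_def)
qed

lemma nn_integral_gnomonic_cone_slice: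
  fixes U :: "'a::euclidean_space set"
  assumes "open U"
  shows "(\<integral>\<^sup>+v. indicator (gnomonic_cone U) (v, h) \<partial>lborel)
    = (\<integral>\<^sup>+x. ennreal (indicator U x * indicator {0<..gnomonic_height x} h * h ^ DIM('a)) \<partial>lborel)"
proof (cases "0 < h")
  case True
  have [measurable]: "gnomonic_cone U \<in> sets borel" "U \<in> sets borel"
    using gnomonic_cone_borel assms by auto
  have [measurable]:
    "(\<lambda>x. indicator U x * indicator {0<..gnomonic_height x} h :: real) \<in> borel_measurable borel"
    unfolding indicator_def greaterThanAtMost_iff by measurable
  have "(\<integral>\<^sup>+v. indicator (gnomonic_cone U) (v, h) \<partial>lborel)
      = ennreal (\<bar>h\<bar> ^ DIM('a)) * (\<integral>\<^sup>+x. indicator (gnomonic_cone U) (h *\<^sub>R x, h) \<partial>lborel)"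
    using True
    by (intro nn_integral_lborel_scaleR[where g="\<lambda>v. indicator (gnomonic_cone U) (v, h)"]) simp_all
  also have "\<dots> = (\<integral>\<^sup>+x. ennreal (h ^ DIM('a)) *
      ennreal (indicator U x * indicator {0<..gnomonic_height x} h) \<partial>lborel)"
    using True by (subst nn_integral_cmult[symmetric])
      (auto simp: indicator_gnomonic_cone_slice ennreal_indicator[symmetric])
  also have "\<dots> = (\<integral>\<^sup>+x. ennreal (indicator U x * indicator {0<..gnomonic_height x} h * h ^ DIM('a)) \<partial>lborel)"
    using True by (intro nn_integral_cong) (simp add: ennreal_mult'[symmetric] mult_ac)
  finally show ?thesis .
qed (simp add: gnomonic_cone_def indicator_def)

text \<open>Cavalieri: integrating the slice volumes over 0 < h \<le> gnomonic_height x produces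
  gnomonic_height x ^ (n + 1) / (n + 1), which is the Cauchy density divided by n + 1.\<close>

lemma emeasure_gnomonic_cone:
  fixes U :: "'a::euclidean_space set"
  assumes "open U"
  shows "emeasure lborel (gnomonic_cone U) = ennreal (1 / (real DIM('a) + 1)) * cauchy_mass U"
proof -
  let ?n = "DIM('a)"
  define F where "F x h = ennreal (indicator U x * indicator {0<..gnomonic_height x} h * h ^ ?n)"
    for x :: 'a and h :: real
  have [measurable]: "gnomonic_cone U \<in> sets borel" "U \<in> sets borel"
    using gnomonic_cone_borel assms by auto
  have F_measurable: "case_prod F \<in> borel_measurable (lborel \<Otimes>\<^sub>M lborel)"
    unfolding F_def indicator_def greaterThanAtMost_iff by measurable
  have "emeasure lborel (gnomonic_cone U) = (\<integral>\<^sup>+z. indicator (gnomonic_cone U) z \<partial>(lborel \<Otimes>\<^sub>M lborel))"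
    by (simp add: lborel_prod)
  also have "\<dots> = (\<integral>\<^sup>+h. \<integral>\<^sup>+v. indicator (gnomonic_cone U) (v, h) \<partial>lborel \<partial>lborel)"
    by (rule lborel_pair.nn_integral_snd[symmetric]) (subst lborel_prod, measurable)
  also have "\<dots> = (\<integral>\<^sup>+h. \<integral>\<^sup>+x. F x h \<partial>lborel \<partial>lborel)"
    by (simp add: nn_integral_gnomonic_cone_slice[OF assms] F_def)
  also have "\<dots> = (\<integral>\<^sup>+x. \<integral>\<^sup>+h. F x h \<partial>lborel \<partial>lborel)"
    by (rule lborel_pair.Fubini'[OF F_measurable])
  also have "\<dots> = (\<integral>\<^sup>+x. ennreal (1 / (real ?n + 1)) * (indicator U x * ennreal (cauchy_dens ?n x)) \<partial>lborel)"
  proof (rule nn_integral_cong)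
    fix x :: 'a
    have "(\<integral>\<^sup>+h. F x h \<partial>lborel) = indicator U x * ennreal (gnomonic_height x ^ (?n + 1) / (?n + 1))"
      using nn_integral_power_interval[of "gnomonic_height x" ?n] gnomonic_height_pos[of x]
      by (cases "x \<in> U") (simp_all add: F_def)
    moreover have "ennreal (gnomonic_height x ^ (?n + 1) / (?n + 1))
        = ennreal (1 / (real ?n + 1)) * ennreal (cauchy_dens ?n x)"
      unfolding gnomonic_height_power by (simp add: ennreal_mult'[symmetric] add.commute)
    ultimately show "(\<integral>\<^sup>+h. F x h \<partial>lborel)
        = ennreal (1 / (real ?n + 1)) * (indicator U x * ennreal (cauchy_dens ?n x))"
      by (simp add: mult_ac)
  qed
  also have "\<dots> = ennreal (1 / (real ?n + 1)) * cauchy_mass U"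
    unfolding cauchy_mass_def by (rule nn_integral_cmult) (simp add: cauchy_dens_def)
  finally show ?thesis .
qed

lemma svol_gnomonic_inv_open:
  fixes U :: "'a::euclidean_space set"
  assumes "open U"
  shows "svol (gnomonic_inv ` U) = enn2real (cauchy_mass U)"
proof -
  let ?n = "DIM('a)"
  have borel: "gnomonic_cone U \<in> sets borel" by (rule gnomonic_cone_borel[OF assms])
  have "{0} \<in> null_sets (lebesgue :: ('a \<times> real) measure)"
    by (rule null_sets_completionI) (simp add: countable_imp_null_set_lborel)
  then have "measure lebesgue (insert 0 (gnomonic_cone U)) = measure lborel (gnomonic_cone U)"
    using borel measure_Un_null_set[of "gnomonic_cone U" lebesgue "{0}"] by simp
  also have "\<dots> = 1 / (real ?n + 1) * enn2real (cauchy_mass U)"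
    by (simp add: measure_def emeasure_gnomonic_cone[OF assms] enn2real_mult)
  finally show ?thesis
    by (simp add: svol_gnomonic_inv_image add.commute)
qed

text \<open>Finiteness of the Cauchy mass comes for free from the boundedness of the cone.\<close>

lemma cauchy_mass_finite:
  fixes U :: "'a::euclidean_space set"
  assumes "open U"
  shows "cauchy_mass U < \<infinity>"
proof -
  have "emeasure lborel (gnomonic_cone U) \<le> emeasure lborel (cball (0::'a \<times> real) 1)"
    by (intro emeasure_mono gnomonic_cone_subset_cball) simp
  then have "ennreal (1 / (real DIM('a) + 1)) * cauchy_mass U < \<infinity>"
    using emeasure_lborel_cball_finite[of "0::'a \<times> real" 1]
    by (simp add: emeasure_gnomonic_cone[OF assms])
  then show ?thesis by (auto simp: ennreal_mult_less_top)
qed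

lemma scaleR_mem_insert_zero_gnomonic_cone:
  assumes "z \<in> insert 0 (gnomonic_cone K)" "0 \<le> c" "c \<le> 1"
  shows "c *\<^sub>R z \<in> insert 0 (gnomonic_cone K)"
  using assms by (cases "c = 0") (auto simp: gnomonic_cone_def gnomonic_scaleR mult_le_one)

lemma convex_insert_zero_gnomonic_cone:
  fixes K :: "'a::real_normed_vector set"
  assumes "convex K"
  shows "convex (insert 0 (gnomonic_cone K))"
proof -
  have lincomb: "u *\<^sub>R x + v *\<^sub>R y \<in> gnomonic_cone K"
    if "x \<in> gnomonic_cone K" "y \<in> gnomonic_cone K" "0 \<le> u" "0 \<le> v" "u + v = 1" for x y and u v :: real
  proof -
    have x: "0 < snd x" "norm x \<le> 1" "gnomonic x \<in> K"
      and y: "0 < snd y" "norm y \<le> 1" "gnomonic y \<in> K"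
      using that(1,2) by (auto simp: gnomonic_cone_def)
    have "u \<noteq> 0 \<or> v \<noteq> 0" using that(5) by auto
    then have "0 < u * snd x + v * snd y"
      using that(3,4) x(1) y(1) by (auto simp: add_pos_nonneg add_nonneg_pos)
    moreover have "norm (u *\<^sub>R x + v *\<^sub>R y) \<le> u * norm x + v * norm y"
      using norm_triangle_ineq[of "u *\<^sub>R x" "v *\<^sub>R y"] that(3,4) by simp
    moreover have "u * norm x + v * norm y \<le> u * 1 + v * 1"
      using that(3,4) x(2) y(2) by (intro add_mono mult_left_mono) auto
    moreover have "gnomonic (u *\<^sub>R x + v *\<^sub>R y) \<in> K"
      using gnomonic_lincomb_in_segment[OF that(3,4) \<open>u \<noteq> 0 \<or> v \<noteq> 0\<close> x(1) y(1)]
        closed_segment_subset[OF x(3) y(3) assms] by blast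
    ultimately show ?thesis
      using that(5) by (simp add: gnomonic_cone_def)
  qed
  show ?thesis
  proof (rule convexI)
    fix x y and u v :: real
    assume x: "x \<in> insert 0 (gnomonic_cone K)" and y: "y \<in> insert 0 (gnomonic_cone K)"
      and uv: "0 \<le> u" "0 \<le> v" "u + v = 1"
    consider "x = 0" | "y = 0" | "x \<in> gnomonic_cone K" "y \<in> gnomonic_cone K"
      using x y by blast
    then show "u *\<^sub>R x + v *\<^sub>R y \<in> insert 0 (gnomonic_cone K)"
    proof cases
      case 1
      then show ?thesis using scaleR_mem_insert_zero_gnomonic_cone[OF y, of v] uv by simp
    next
      case 2
      then show ?thesis using scaleR_mem_insert_zero_gnomonic_cone[OF x, of u] uv by simp
    qed (use lincomb uv in blast)
  qed
qed

lemma interior_insert_zero_gnomonic_cone: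
  fixes K :: "'a::real_normed_vector set"
  shows "interior (insert 0 (gnomonic_cone K)) \<subseteq> insert 0 (gnomonic_cone (interior K))"
proof
  fix z assume z: "z \<in> interior (insert 0 (gnomonic_cone K))"
  show "z \<in> insert 0 (gnomonic_cone (interior K))"
  proof (cases "z = 0")
    case False
    then have cone: "z \<in> gnomonic_cone K" using z interior_subset by blast
    then have s: "0 < snd z" by (simp add: gnomonic_cone_def)
    obtain e where e: "0 < e" "ball z e \<subseteq> insert 0 (gnomonic_cone K)"
      using z unfolding mem_interior by blast
    have "ball (gnomonic z) (e / snd z) \<subseteq> K"
    proof
      fix p assume "p \<in> ball (gnomonic z) (e / snd z)"
      then have "norm (gnomonic z - p) * snd z < e"
        using s by (simp add: dist_norm pos_less_divide_eq)
      moreover have "z - (snd z *\<^sub>R p, snd z) = (snd z *\<^sub>R (gnomonic z - p), 0)"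
        using s by (cases z) (simp add: gnomonic_def scaleR_diff_right)
      ultimately have "(snd z *\<^sub>R p, snd z) \<in> ball z e"
        using s by (simp add: dist_norm norm_Pair mult.commute)
      then have "(snd z *\<^sub>R p, snd z) \<in> gnomonic_cone K"
        using e(2) s by (auto simp: zero_prod_def)
      then show "p \<in> K"
        using s by (simp add: gnomonic_cone_def gnomonic_def)
    qed
    then have "gnomonic z \<in> interior K"
      using e(1) s unfolding mem_interior by (metis divide_pos_pos)
    then show ?thesis
      using cone by (simp add: gnomonic_cone_def)
  qed simp
qed

lemma svol_gnomonic_inv_convex:
  fixes K :: "'a::euclidean_space set"
  assumes "convex K"
  shows "svol (gnomonic_inv ` K) = svol (gnomonic_inv ` interior K)"
proof -
  let ?C = "insert 0 (gnomonic_cone K)" and ?D = "insert 0 (gnomonic_cone (interior K))"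
  have convex: "convex ?C" by (rule convex_insert_zero_gnomonic_cone[OF assms])
  have bounded: "bounded ?C"
    using gnomonic_cone_subset_cball by (auto intro: bounded_subset[OF bounded_cball])
  have C: "?C \<in> lmeasurable" by (rule measurable_convex[OF convex bounded])
  have D: "?D \<in> lmeasurable" by (rule lebesgue_measurable_insert_gnomonic_cone) simp
  have "measure lebesgue ?C = measure lebesgue (interior ?C)"
    by (rule measure_interior[OF bounded negligible_convex_frontier[OF convex], symmetric])
  also have "\<dots> \<le> measure lebesgue ?D"
    by (rule measure_mono_fmeasurable[OF interior_insert_zero_gnomonic_cone _ D]) simp
  finally have "measure lebesgue ?C \<le> measure lebesgue ?D" .
  moreover have "measure lebesgue ?D \<le> measure lebesgue ?C"
    using gnomonic_cone_mono[OF interior_subset, of K]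
    by (intro measure_mono_fmeasurable[OF _ _ C]) (use D in auto)
  ultimately show ?thesis
    by (simp add: svol_gnomonic_inv_image)
qed

lemma cauchy_mass_UNIV_pos: "0 < cauchy_mass (UNIV :: 'a::euclidean_space set)"
proof -
  have "1 + (norm x)\<^sup>2 \<noteq> 0" for x :: 'a
    using one_plus_norm_sq_pos[of x] by simp
  moreover have "\<not> (AE x in (lborel :: 'a measure). False)"
    using AE_iff_null_sets[of "UNIV :: 'a set" lborel] by (simp add: null_sets_def)
  ultimately have "cauchy_mass (UNIV :: 'a set) \<noteq> 0"
    unfolding cauchy_mass_def
    by (subst nn_integral_0_iff_AE) (simp_all add: cauchy_dens_def)
  then show ?thesis by (simp add: zero_less_iff_neq_zero)
qed

lemma measure_nu:
  fixes U :: "'a::euclidean_space set"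
  assumes "U \<in> sets borel"
  shows "measure (nu DIM('a)) U = enn2real (cauchy_mass U) / enn2real (cauchy_mass (UNIV :: 'a set))"
proof -
  let ?Z = "enn2real (cauchy_mass (UNIV :: 'a set))"
  have Z: "0 < ?Z"
    using cauchy_mass_UNIV_pos cauchy_mass_finite[of UNIV] by (simp add: enn2real_positive_iff)
  have "integral\<^sup>L (lebesgue :: 'a measure) (cauchy_dens DIM('a)) = integral\<^sup>L (lborel :: 'a measure) (cauchy_dens DIM('a))"
    using integral_completion[of "cauchy_dens DIM('a)" "lborel :: 'a measure"]
    by (simp add: measurable_lborel1)
  also have "\<dots> = ?Z"
    by (simp add: integral_eq_nn_integral cauchy_dens_nonneg cauchy_mass_def)
  finally have normalisation: "integral\<^sup>L (lebesgue :: 'a measure) (cauchy_dens DIM('a)) = ?Z" .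
  have "emeasure (nu DIM('a)) U
      = (\<integral>\<^sup>+x. ennreal (cauchy_dens DIM('a) x / ?Z) * indicator U x \<partial>lborel)"
    unfolding nu_def normalisation using assms
    by (simp add: emeasure_density measurable_completion nn_integral_completion)
  also have "\<dots> = (\<integral>\<^sup>+x. ennreal (1 / ?Z) * (indicator U x * ennreal (cauchy_dens DIM('a) x)) \<partial>lborel)"
    using Z by (intro nn_integral_cong) (simp add: ennreal_mult'[symmetric] cauchy_dens_nonneg mult_ac)
  also have "\<dots> = ennreal (1 / ?Z) * cauchy_mass U"
    unfolding cauchy_mass_def using assms by (intro nn_integral_cmult) (simp add: measurable_lborel1)
  finally show ?thesis
    using Z by (simp add: measure_def enn2real_mult)
qed

lemma measure_nu_convex_interior:
  fixes K :: "'a::euclidean_space set"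
  assumes "convex K"
  shows "measure (nu DIM('a)) K = measure (nu DIM('a)) (interior K)"
proof -
  let ?f = "\<lambda>x::'a. ennreal (cauchy_dens DIM('a) x / integral\<^sup>L (lebesgue :: 'a measure) (cauchy_dens DIM('a)))"
  have "negligible (K - interior K)"
    by (rule negligible_subset[OF negligible_convex_frontier[OF assms]])
      (use closure_subset in \<open>auto simp: frontier_def\<close>)
  then have null: "K - interior K \<in> null_sets lebesgue"
    by (simp add: negligible_iff_null_sets)
  have "?f \<in> borel_measurable lebesgue"
    by (intro measurable_completion) (simp add: measurable_lborel1[symmetric])
  then have "K - interior K \<in> null_sets (nu DIM('a))"
    unfolding nu_def null_sets_density_iff[OF \<open>?f \<in> _\<close>]
    using null AE_not_in[OF null] by (auto elim: AE_mp)
  moreover have "interior K \<in> sets (nu DIM('a))"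
    by (simp add: nu_def)
  ultimately have "measure (nu DIM('a)) (interior K \<union> (K - interior K)) = measure (nu DIM('a)) (interior K)"
    by (intro measure_Un_null_set)
  moreover have "interior K \<union> (K - interior K) = K"
    using interior_subset by blast
  ultimately show ?thesis by simp
qed

lemma svol_hemisphere:
  "svol (sball (north :: 'a::euclidean_space \<times> real) (pi/2)) = enn2real (cauchy_mass (UNIV :: 'a set))"
  using svol_gnomonic_inv_open[of "UNIV :: 'a set"] by (simp add: range_gnomonic_inv)

lemma svol_hemisphere_pos: "0 < svol (sball (north :: 'a::euclidean_space \<times> real) (pi/2))"
  using cauchy_mass_UNIV_pos cauchy_mass_finite[of "UNIV :: 'a set"]
  by (simp add: svol_hemisphere enn2real_positive_iff)

lemma measure_nu_convex:
  fixes K :: "'a::euclidean_space set"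
  assumes "convex K"
  shows "measure (nu DIM('a)) K = svol (gnomonic_inv ` K) / svol (sball (north :: 'a \<times> real) (pi/2))"
  using measure_nu_convex_interior[OF assms] measure_nu[of "interior K"]
    svol_gnomonic_inv_convex[OF assms] svol_gnomonic_inv_open[of "interior K"]
  by (simp add: svol_hemisphere)

lemma nu_correlation_iff_svol_correlation:
  fixes K M :: "'a::euclidean_space set"
  assumes "convex K" "convex M"
  shows "measure (nu DIM('a)) K * measure (nu DIM('a)) M \<le> measure (nu DIM('a)) (K \<inter> M)
    \<longleftrightarrow> svol (gnomonic_inv ` K) * svol (gnomonic_inv ` M)
          \<le> svol (gnomonic_inv ` K \<inter> gnomonic_inv ` M) * svol (sball (north :: 'a \<times> real) (pi/2))"
proof -
  have "gnomonic_inv ` K \<inter> gnomonic_inv ` M = gnomonic_inv ` (K \<inter> M)"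
    by (rule image_Int[OF inj_gnomonic_inv, symmetric])
  then show ?thesis
    using svol_hemisphere_pos[where 'a='a] convex_Int[OF assms]
    by (simp add: measure_nu_convex assms field_simps power2_eq_square)
qed

theorem mainTheorem4:
  shows "(\<forall>K M :: 'a::euclidean_space set. convex K \<and> convex M \<and> origin_symmetric K \<and> origin_symmetric M
            \<longrightarrow> measure (nu DIM('a)) (K \<inter> M) \<ge> measure (nu DIM('a)) K * measure (nu DIM('a)) M)
     \<longleftrightarrow>
         (\<forall>K1 K2 :: ('a \<times> real) set.
            K1 \<subseteq> sball north (pi/2) \<and> K2 \<subseteq> sball north (pi/2) \<and>
            geod_convex K1 \<and> geod_convex K2 \<and>
            centrally_symmetric north K1 \<and> centrally_symmetric north K2
            \<longrightarrow> svol (K1 \<inter> K2) * svol (sball (north::'a \<times> real) (pi/2)) \<ge> svol K1 * svol K2)"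
proof (intro iffI allI impI; elim conjE)
  fix K1 K2 :: "('a \<times> real) set"
  assume A: "\<forall>K M :: 'a set. convex K \<and> convex M \<and> origin_symmetric K \<and> origin_symmetric M
      \<longrightarrow> measure (nu DIM('a)) (K \<inter> M) \<ge> measure (nu DIM('a)) K * measure (nu DIM('a)) M"
    and K1: "K1 \<subseteq> sball north (pi/2)" "geod_convex K1" "centrally_symmetric north K1"
    and K2: "K2 \<subseteq> sball north (pi/2)" "geod_convex K2" "centrally_symmetric north K2"
  have "convex (gnomonic ` K1)" "convex (gnomonic ` K2)"
    using K1 K2 by (simp_all add: convex_gnomonic_image)
  moreover have "origin_symmetric (gnomonic ` K1)" "origin_symmetric (gnomonic ` K2)"
    using K1 K2 by (simp_all add: origin_symmetric_gnomonic_image)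
  ultimately show "svol (K1 \<inter> K2) * svol (sball (north :: 'a \<times> real) (pi/2)) \<ge> svol K1 * svol K2"
    using A nu_correlation_iff_svol_correlation[of "gnomonic ` K1" "gnomonic ` K2"]
    by (simp add: gnomonic_inv_gnomonic_image K1 K2)
next
  fix K M :: "'a set"
  assume B: "\<forall>K1 K2 :: ('a \<times> real) set. K1 \<subseteq> sball north (pi/2) \<and> K2 \<subseteq> sball north (pi/2) \<and>
      geod_convex K1 \<and> geod_convex K2 \<and> centrally_symmetric north K1 \<and> centrally_symmetric north K2
      \<longrightarrow> svol (K1 \<inter> K2) * svol (sball (north::'a \<times> real) (pi/2)) \<ge> svol K1 * svol K2"
    and K: "convex K" "origin_symmetric K" and M: "convex M" "origin_symmetric M"
  have "gnomonic_inv ` K \<subseteq> sball north (pi/2)" "gnomonic_inv ` M \<subseteq> sball north (pi/2)"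
    using range_gnomonic_inv by blast+
  moreover have "geod_convex (gnomonic_inv ` K)" "geod_convex (gnomonic_inv ` M)"
    using K M by (simp_all add: geod_convex_gnomonic_inv_image)
  moreover have "centrally_symmetric north (gnomonic_inv ` K)" "centrally_symmetric north (gnomonic_inv ` M)"
    using K M by (simp_all add: centrally_symmetric_gnomonic_inv_image)
  ultimately show "measure (nu DIM('a)) (K \<inter> M) \<ge> measure (nu DIM('a)) K * measure (nu DIM('a)) M"
    using nu_correlation_iff_svol_correlation[OF K(1) M(1)] by (auto intro!: B[rule_format])
qed

end
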